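(* Let $A$ be a ring, $W$ a multiplicative subset of $A$, $M$ a left $A$-module, $S \subseteq M$, and $T \subseteq A$. Then $[T]^W_A S \subseteq [TS]^W_M$. Moreover, if $T$ is contained in the center $Z(A)$ of $A$, then $[T]^W_A [S]^W_M \subseteq [TS]^W_M$.
   Context: Rings are unital, not necessarily commutative. For $T\subseteq A$ and a left $A$-module $N$, a $T$-factroid of $N$ is an additive subgroup $F$ of $N$ such that for all $x\in N$ and $t\in T$, $tx\in F$ implies $x\in F$; for $S\subseteq N$, $[S]^T_N$ is the smallest $T$-factroid of $N$ containing $S$ ($A$ itself is viewed as a left $A$-module). For subsets $X\subseteq A$, $Y\subseteq M$, $XY=\{xy\mid x\in X, y\in Y\}$. *)

theory Defs
  imports Main
begin

definition left_module :: "('a::ring_1 \<Rightarrow> 'm::ab_group_add \<Rightarrow> 'm) \<Rightarrow> bool" where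
  "left_module act \<longleftrightarrow>
     (\<forall>a x y. act a (x + y) = act a x + act a y) \<and>
     (\<forall>a b x. act (a + b) x = act a x + act b x) \<and>
     (\<forall>a b x. act (a * b) x = act a (act b x)) \<and>
     (\<forall>x. act 1 x = x)"

definition multiplicative_subset :: "'a::ring_1 set \<Rightarrow> bool" where
  "multiplicative_subset W \<longleftrightarrow> 1 \<in> W \<and> (\<forall>a\<in>W. \<forall>b\<in>W. a * b \<in> W)"

definition additive_subgroup :: "'m::ab_group_add set \<Rightarrow> bool" where
  "additive_subgroup F \<longleftrightarrow> 0 \<in> F \<and> (\<forall>x\<in>F. \<forall>y\<in>F. x + y \<in> F) \<and> (\<forall>x\<in>F. - x \<in> F)"

definition factroid :: "('a \<Rightarrow> 'm \<Rightarrow> 'm) \<Rightarrow> 'a set \<Rightarrow> 'm::ab_group_add set \<Rightarrow> bool" where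
  "factroid act T F \<longleftrightarrow> additive_subgroup F \<and> (\<forall>x. \<forall>t\<in>T. act t x \<in> F \<longrightarrow> x \<in> F)"

text \<open>[S]^T_N: the smallest T-factroid containing S.\<close>
definition factroid_hull :: "('a \<Rightarrow> 'm \<Rightarrow> 'm) \<Rightarrow> 'a set \<Rightarrow> 'm::ab_group_add set \<Rightarrow> 'm set" where
  "factroid_hull act T S = \<Inter> {F. factroid act T F \<and> S \<subseteq> F}"

definition set_act :: "('a \<Rightarrow> 'm \<Rightarrow> 'm) \<Rightarrow> 'a set \<Rightarrow> 'm set \<Rightarrow> 'm set" where
  "set_act act X Y = {act x y | x y. x \<in> X \<and> y \<in> Y}"

definition ring_center :: "'a::ring_1 set" where
  "ring_center = {z. \<forall>a. z * a = a * z}"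

end

theory Submission
  imports Defs
begin

text \<open>For a W-factroid F of M containing TS, the set of scalars a with a s \<in> F is a
  W-factroid of A containing T, so it contains [T]^W_A. If every t \<in> T commutes with W,
  then dually the set of x with t x \<in> F is a W-factroid of M containing S, so it contains
  [S]^W_M; this gives T [S]^W_M \<subseteq> F, and the first argument applied to [S]^W_M in place
  of S finishes the proof.\<close>

lemma factroid_factroid_hull: "factroid act T (factroid_hull act T S)"
  unfolding factroid_def additive_subgroup_def factroid_hull_def by blast

lemma factroid_hull_subset_iff:
  assumes "factroid act T F"
  shows "factroid_hull act T S \<subseteq> F \<longleftrightarrow> S \<subseteq> F"
proof
  have "S \<subseteq> factroid_hull act T S"
    unfolding factroid_hull_def by blast
  then show "factroid_hull act T S \<subseteq> F \<Longrightarrow> S \<subseteq> F" by blast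
  show "S \<subseteq> F \<Longrightarrow> factroid_hull act T S \<subseteq> F"
    using assms unfolding factroid_hull_def by blast
qed

lemma additive_subgroup_vimage:
  fixes f :: "'a::ab_group_add \<Rightarrow> 'b::ab_group_add"
  assumes additive: "\<And>x y. f (x + y) = f x + f y"
    and "additive_subgroup F"
  shows "additive_subgroup (f -` F)"
proof -
  have zero: "f 0 = 0"
    using additive[of 0 0] by simp
  have "f (- x) = - f x" for x
    using additive[of "- x" x] zero by (simp add: eq_neg_iff_add_eq_0)
  with zero assms show ?thesis
    unfolding additive_subgroup_def by auto
qed

lemma factroid_vimage_act_at:
  assumes "left_module act" and "factroid act W F"
  shows "factroid (*) W ((\<lambda>a. act a y) -` F)"
proof -
  have "additive_subgroup ((\<lambda>a. act a y) -` F)"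
    using assms additive_subgroup_vimage[of "\<lambda>a. act a y" F]
    unfolding left_module_def factroid_def by blast
  moreover have "act (w * a) y = act w (act a y)" for w a
    using assms(1) unfolding left_module_def by blast
  ultimately show ?thesis
    using assms(2) unfolding factroid_def by auto
qed

lemma factroid_vimage_act:
  assumes "left_module act" and "factroid act W F"
    and commute: "\<forall>w\<in>W. t * w = w * t"
  shows "factroid act W (act t -` F)"
proof -
  have "additive_subgroup (act t -` F)"
    using assms(1,2) additive_subgroup_vimage[of "act t" F]
    unfolding left_module_def factroid_def by blast
  moreover have "act t (act w x) = act w (act t x)" if "w \<in> W" for w x
    using assms(1) commute that unfolding left_module_def by metis
  ultimately show ?thesis
    using assms(2) unfolding factroid_def by auto
qed

lemma set_act_factroid_hull_left_subset:
  assumes "left_module act" and "factroid act W F" and "set_act act T S \<subseteq> F"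
  shows "set_act act (factroid_hull (*) W T) S \<subseteq> F"
proof -
  have "factroid_hull (*) W T \<subseteq> (\<lambda>a. act a s) -` F" if "s \<in> S" for s
    using assms that
    by (auto simp: factroid_hull_subset_iff factroid_vimage_act_at set_act_def)
  then show ?thesis
    unfolding set_act_def by blast
qed

lemma set_act_factroid_hull_right_subset:
  assumes "left_module act" and "factroid act W F" and "set_act act T S \<subseteq> F"
    and "\<forall>t\<in>T. \<forall>w\<in>W. t * w = w * t"
  shows "set_act act T (factroid_hull act W S) \<subseteq> F"
proof -
  have "factroid_hull act W S \<subseteq> act t -` F" if "t \<in> T" for t
    using assms that
    by (auto simp: factroid_hull_subset_iff factroid_vimage_act set_act_def)
  then show ?thesis
    unfolding set_act_def by blast
qed

theorem proposition5p7:
  fixes act :: "'a::ring_1 \<Rightarrow> 'm::ab_group_add \<Rightarrow> 'm"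
    and W T :: "'a set" and S :: "'m set"
  assumes "left_module act"
    and "multiplicative_subset W"
  shows "set_act act (factroid_hull (*) W T) S \<subseteq> factroid_hull act W (set_act act T S)
     \<and> (T \<subseteq> ring_center \<longrightarrow>
         set_act act (factroid_hull (*) W T) (factroid_hull act W S)
           \<subseteq> factroid_hull act W (set_act act T S))"
proof -
  define F where "F = factroid_hull act W (set_act act T S)"
  have F: "factroid act W F"
    unfolding F_def by (rule factroid_factroid_hull)
  have TS: "set_act act T S \<subseteq> F"
    using factroid_hull_subset_iff[OF F] unfolding F_def by blast
  have "set_act act T (factroid_hull act W S) \<subseteq> F" if "T \<subseteq> ring_center"
    using set_act_factroid_hull_right_subset[OF assms(1) F TS] that
    unfolding ring_center_def by blast
  then show ?thesis
    using set_act_factroid_hull_left_subset[OF assms(1) F] TS unfolding F_def by blast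
qed

end
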